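(* Let $G$ be a 5-vertex-critical $(P_5,\text{chair})$-free graph that is not isomorphic to any graph in $\mathcal{F}=\{K_5,W,P,Q_1,Q_2,Q_3\}$, and let $C=v_1v_2v_3v_4v_5v_1$ be an induced $C_5$ in $G$. Then $|S^2_3(i)|\le 3$ for all $1\le i\le 5$.
   Context: All graphs are finite and simple; $P_5$ is the path on 5 vertices; the chair is a $P_4$ plus a vertex adjacent to exactly one of the two middle vertices of the $P_4$; "$H$-free" means no induced subgraph isomorphic to $H$; $G$ is $k$-vertex-critical if $\chi(G)=k$ and $\chi(G-v)<k$ for all $v$. Indices modulo 5. $S^2_3(i)=\{v\in V(G)\setminus V(C): N(v)\cap V(C)=\{v_{i-2},v_i,v_{i+2}\}\}$. The graphs of $\mathcal{F}$ (other than $K_5$) are given by adjacency lists on vertex sets $\{0,\dots,n-1\}$: $W$: 0:1 4 5 6; 1:0 2 5 6; 2:1 3 5 6; 3:2 4 5 6; 4:0 3 5 6; 5:0 1 2 3 4 6; 6:0 1 2 3 4 5. $P$: 0:1 4 5 6; 1:0 2 7 8; 2:1 3 5 6 7 8; 3:2 4 5 6 7 8; 4:0 3 7 8; 5:0 2 3 7; 6:0 2 3 8; 7:1 2 3 4 5 8; 8:1 2 3 4 6 7. $Q_1$: 0:1 4 5 6; 1:0 2 5 6 7 8; 2:1 3 5 6 7 8; 3:2 4 7 8; 4:0 3 7 8; 5:0 1 2 6 7; 6:0 1 2 5 8; 7:1 2 3 4 5; 8:1 2 3 4 6. $Q_2$: 0:1 4 5 6; 1:0 2 5 6 7 8; 2:1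 3 5 6 7 8; 3:2 4 5 6 7 8; 4:0 3 7 8; 5:0 2 3 6 7; 6:0 2 3 5 8; 7:1 2 3 4 5; 8:1 2 3 4 6. $Q_3$: 0:1 4 5 6; 1:0 2 5 7 8; 2:1 3 5 7 8; 3:2 4 6 7 8; 4:0 3 6 7 8; 5:0 1 2 6; 6:0 3 4 5 8; 7:1 2 3 4 8; 8:1 2 3 4 6 7. *)

theory Defs
  imports Main
begin

definition simple_graph :: "'a set \<Rightarrow> ('a \<Rightarrow> 'a \<Rightarrow> bool) \<Rightarrow> bool" where
  "simple_graph V E \<longleftrightarrow> finite V \<and> (\<forall>x y. E x y \<longrightarrow> x \<in> V \<and> y \<in> V)
     \<and> (\<forall>x y. E x y \<longrightarrow> E y x) \<and> (\<forall>x. \<not> E x x)"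

definition colorable :: "'a set \<Rightarrow> ('a \<Rightarrow> 'a \<Rightarrow> bool) \<Rightarrow> nat \<Rightarrow> bool" where
  "colorable V E k \<longleftrightarrow> (\<exists>f :: 'a \<Rightarrow> nat. (\<forall>v\<in>V. f v < k)
     \<and> (\<forall>x\<in>V. \<forall>y\<in>V. E x y \<longrightarrow> f x \<noteq> f y))"

definition chromatic_number :: "'a set \<Rightarrow> ('a \<Rightarrow> 'a \<Rightarrow> bool) \<Rightarrow> nat" where
  "chromatic_number V E = (LEAST k. colorable V E k)"

definition vertex_critical :: "'a set \<Rightarrow> ('a \<Rightarrow> 'a \<Rightarrow> bool) \<Rightarrow> nat \<Rightarrow> bool" where
  "vertex_critical V E k \<longleftrightarrow> chromatic_number V E = k
     \<and> (\<forall>v\<in>V. chromatic_number (V - {v}) E < k)"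

(* small pattern graphs on {0..<n} given by adjacency lists (symmetric closure) *)
definition adj_rel :: "nat list list \<Rightarrow> nat \<Rightarrow> nat \<Rightarrow> bool" where
  "adj_rel A i j \<longleftrightarrow> (i < length A \<and> j \<in> set (A ! i)) \<or> (j < length A \<and> i \<in> set (A ! j))"

definition contains_induced :: "'a set \<Rightarrow> ('a \<Rightarrow> 'a \<Rightarrow> bool) \<Rightarrow> nat \<Rightarrow> (nat \<Rightarrow> nat \<Rightarrow> bool) \<Rightarrow> bool" where
  "contains_induced V E n H \<longleftrightarrow> (\<exists>f. inj_on f {0..<n} \<and> f ` {0..<n} \<subseteq> V
     \<and> (\<forall>i<n. \<forall>j<n. E (f i) (f j) \<longleftrightarrow> H i j))"

definition isomorphic_to :: "'a set \<Rightarrow> ('a \<Rightarrow> 'a \<Rightarrow> bool) \<Rightarrow> nat \<Rightarrow> (nat \<Rightarrow> nat \<Rightarrow> bool) \<Rightarrow> bool" where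
  "isomorphic_to V E n H \<longleftrightarrow> (\<exists>f. bij_betw f {0..<n} V
     \<and> (\<forall>i<n. \<forall>j<n. E (f i) (f j) \<longleftrightarrow> H i j))"

definition P5_adj :: "nat list list" where
  "P5_adj = [[1], [0, 2], [1, 3], [2, 4], [3]]"

(* P4 = 0-1-2-3, plus vertex 4 adjacent to the middle vertex 1 only *)
definition chair_adj :: "nat list list" where
  "chair_adj = [[1], [0, 2, 4], [1, 3], [2], [1]]"

definition K5_adj :: "nat list list" where
  "K5_adj = [[1,2,3,4], [0,2,3,4], [0,1,3,4], [0,1,2,4], [0,1,2,3]]"

definition W_adj :: "nat list list" where
  "W_adj = [ [1, 4, 5, 6], [0, 2, 5, 6], [1, 3, 5, 6], [2, 4, 5, 6], [0, 3, 5, 6], [0, 1, 2, 3, 4, 6], [0, 1, 2, 3, 4, 5] ]"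

definition P_adj :: "nat list list" where
  "P_adj = [ [1, 4, 5, 6], [0, 2, 7, 8], [1, 3, 5, 6, 7, 8], [2, 4, 5, 6, 7, 8], [0, 3, 7, 8], [0, 2, 3, 7], [0, 2, 3, 8], [1, 2, 3, 4, 5, 8], [1, 2, 3, 4, 6, 7] ]"

definition Q1_adj :: "nat list list" where
  "Q1_adj = [ [1, 4, 5, 6], [0, 2, 5, 6, 7, 8], [1, 3, 5, 6, 7, 8], [2, 4, 7, 8], [0, 3, 7, 8], [0, 1, 2, 6, 7], [0, 1, 2, 5, 8], [1, 2, 3, 4, 5], [1, 2, 3, 4, 6] ]"

definition Q2_adj :: "nat list list" where
  "Q2_adj = [ [1, 4, 5, 6], [0, 2, 5, 6, 7, 8], [1, 3, 5, 6, 7, 8], [2, 4, 5, 6, 7, 8], [0, 3, 7, 8], [0, 2, 3, 6, 7], [0, 2, 3, 5, 8], [1, 2, 3, 4, 5], [1, 2, 3, 4, 6] ]"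

definition Q3_adj :: "nat list list" where
  "Q3_adj = [ [1, 4, 5, 6], [0, 2, 5, 7, 8], [1, 3, 5, 7, 8], [2, 4, 6, 7, 8], [0, 3, 6, 7, 8], [0, 1, 2, 6], [0, 3, 4, 5, 8], [1, 2, 3, 4, 8], [1, 2, 3, 4, 6, 7] ]"

definition family_F :: "nat list list set" where
  "family_F = {K5_adj, W_adj, P_adj, Q1_adj, Q2_adj, Q3_adj}"

definition induced_C5 :: "'a set \<Rightarrow> ('a \<Rightarrow> 'a \<Rightarrow> bool) \<Rightarrow> (nat \<Rightarrow> 'a) \<Rightarrow> bool" where
  "induced_C5 V E v \<longleftrightarrow> inj_on v {0..<5} \<and> v ` {0..<5} \<subseteq> V
     \<and> (\<forall>i<5. \<forall>j<5. E (v i) (v j) \<longleftrightarrow> (j = (i + 1) mod 5 \<or> i = (j + 1) mod 5))"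

(* S^2_3(i): vertices outside C whose neighbours on C are exactly v_{i-2}, v_i, v_{i+2} *)
definition S23 :: "'a set \<Rightarrow> ('a \<Rightarrow> 'a \<Rightarrow> bool) \<Rightarrow> (nat \<Rightarrow> 'a) \<Rightarrow> nat \<Rightarrow> 'a set" where
  "S23 V E v i = {u \<in> V - v ` {0..<5}.
     {w \<in> v ` {0..<5}. E u w} = {v ((i + 3) mod 5), v (i mod 5), v ((i + 2) mod 5)}}"

end

theory Submission
  imports Defs
begin

text \<open>
  Rotate the cycle so that S = S^2_3(i) is the set of vertices whose neighbours on C are
  exactly c0, c2, c3, and let W be the set of vertices adjacent to c1, c2, c3, c4.
  As G is P5- and chair-free, a vertex with both a neighbour and a non-neighbour in S lies
  in S or in W.  If S contains an edge ab but W is empty, S is therefore a module; all of S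
  sees the edge c2c3, so S is bipartite, and a 4-colouring of G - z (z \<in> S - {a, b}) can be
  recoloured on S into a 4-colouring of G, contradicting criticality.
  A vertex of W has no neighbour on an edge of S (K5 or chair) but sees an end of every
  non-edge of S (chair).  In a critical graph no vertex dominates a non-adjacent one, so any
  two vertices c, d isolated in S are separated by a vertex of W.  If |S| \<ge> 4 and S has an
  edge ab, two further vertices c, d of S are isolated in S, and a vertex of W separating
  them sees neither a nor d.  If S is independent, vertices p, q of W separating c and d in
  both directions are adjacent (otherwise c p c1 q d is an induced P5) and both see a third
  vertex e of S, so p, q, e, c2, c3 form a K5.
\<close>

lemma colorable_subset:
  assumes "colorable V E k" "k \<le> k'" "U \<subseteq> V"
  shows "colorable U E k'"
  using assms unfolding colorable_def by (meson less_le_trans subsetD)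

lemma colorable_card:
  assumes "finite V" "\<And>x. \<not> E x x"
  shows "colorable V E (card V)"
proof -
  obtain h where h: "bij_betw h V {0..<card V}"
    using ex_bij_betw_finite_nat[OF assms(1)] by blast
  then have "\<forall>x\<in>V. \<forall>y\<in>V. E x y \<longrightarrow> h x \<noteq> h y"
    using assms(2) unfolding bij_betw_def inj_on_def by metis
  moreover have "\<forall>x\<in>V. h x < card V"
    using h unfolding bij_betw_def by auto
  ultimately show ?thesis
    unfolding colorable_def by blast
qed

lemma colorable_chromatic_number:
  assumes "finite V" "\<And>x. \<not> E x x"
  shows "colorable V E (chromatic_number V E)"
  unfolding chromatic_number_def by (rule LeastI, rule colorable_card[OF assms])

lemma chromatic_number_le: "colorable V E k \<Longrightarrow> chromatic_number V E \<le> k"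
  unfolding chromatic_number_def by (rule Least_le)

lemma vertex_critical_not_colorable:
  "vertex_critical V E (Suc k) \<Longrightarrow> \<not> colorable V E k"
  unfolding vertex_critical_def using chromatic_number_le by fastforce

lemma vertex_critical_colorable_delete:
  assumes "simple_graph V E" "vertex_critical V E (Suc k)" "w \<in> V"
  shows "colorable (V - {w}) E k"
proof -
  have "colorable (V - {w}) E (chromatic_number (V - {w}) E)"
    using assms(1) by (intro colorable_chromatic_number) (auto simp: simple_graph_def)
  moreover have "chromatic_number (V - {w}) E \<le> k"
    using assms(2,3) unfolding vertex_critical_def by auto
  ultimately show ?thesis by (rule colorable_subset) simp
qed

lemma vertex_critical_no_dominated_vertex:
  assumes G: "simple_graph V E" and crit: "vertex_critical V E (Suc k)"
    and "x \<in> V" "y \<in> V" "x \<noteq> y" "\<not> E x y" and dom: "\<And>w. E x w \<Longrightarrow> E y w"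
  shows False
proof -
  obtain f where f: "\<forall>v\<in>V - {x}. f v < k" "\<forall>a\<in>V - {x}. \<forall>b\<in>V - {x}. E a b \<longrightarrow> f a \<noteq> f b"
    using vertex_critical_colorable_delete[OF G crit \<open>x \<in> V\<close>] unfolding colorable_def by blast
  have sym: "E a b \<Longrightarrow> E b a" and irr: "\<not> E a a" for a b
    using G unfolding simple_graph_def by blast+
  have fy: "f y \<noteq> f w" if "w \<in> V" "E x w" for w
    using f(2) dom[OF \<open>E x w\<close>] irr[of x] irr[of y] \<open>y \<in> V\<close> \<open>x \<noteq> y\<close> \<open>\<not> E x y\<close> that
    by blast
  have "colorable V E k"
    unfolding colorable_def
  proof (intro exI[of _ "f(x := f y)"] conjI ballI impI)
    fix a assume "a \<in> V"
    then show "(f(x := f y)) a < k" using f(1) assms(4,5) by auto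
  next
    fix a b assume ab: "a \<in> V" "b \<in> V" "E a b"
    show "(f(x := f y)) a \<noteq> (f(x := f y)) b"
    proof (cases "a = x")
      case True
      then show ?thesis using fy[of b] ab irr by auto
    next
      case False
      then show ?thesis using fy[of a] f(2) ab sym[OF \<open>E a b\<close>] by auto
    qed
  qed
  then show False
    using vertex_critical_not_colorable[OF crit] by blast
qed

lemma vertex_critical_clique:
  assumes G: "simple_graph V E" and crit: "vertex_critical V E (Suc k)"
    and "K \<subseteq> V" "card K = Suc k" and clique: "\<And>x y. x \<in> K \<Longrightarrow> y \<in> K \<Longrightarrow> x \<noteq> y \<Longrightarrow> E x y"
  shows "V = K"
proof (rule ccontr)
  assume "V \<noteq> K"
  then obtain w where w: "w \<in> V" "w \<notin> K" using \<open>K \<subseteq> V\<close> by blast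
  then obtain f where f: "\<forall>v\<in>V - {w}. f v < k" "\<forall>a\<in>V - {w}. \<forall>b\<in>V - {w}. E a b \<longrightarrow> f a \<noteq> f b"
    using vertex_critical_colorable_delete[OF G crit] unfolding colorable_def by blast
  have "inj_on f K"
  proof (rule inj_onI, rule ccontr)
    fix x y assume "x \<in> K" "y \<in> K" "f x = f y" "x \<noteq> y"
    then show False using f(2) clique[of x y] w \<open>K \<subseteq> V\<close> by blast
  qed
  moreover have "f ` K \<subseteq> {..<k}" using f(1) w \<open>K \<subseteq> V\<close> by auto
  ultimately have "card K \<le> card {..<k}" by (intro card_inj_on_le) auto
  then show False using \<open>card K = Suc k\<close> by simp
qed

lemma colorable_common_neighbours_of_edge:
  assumes col: "colorable U E (k + 2)" and "M \<subseteq> U" "x \<in> U" "y \<in> U" "E x y"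
    and nbr: "\<And>z. z \<in> M \<Longrightarrow> E z x \<and> E z y"
  shows "colorable M E k"
proof -
  obtain g where g: "\<forall>v\<in>U. g v < k + 2" "\<forall>a\<in>U. \<forall>b\<in>U. E a b \<longrightarrow> g a \<noteq> g b"
    using col unfolding colorable_def by blast
  \<comment> \<open>r closes up the gaps left by the two colours g x and g y\<close>
  define r where "r c = c - (if g x < c then 1 else 0) - (if g y < c then 1 else 0)" for c
  have g_M: "g z < k + 2" "g z \<noteq> g x" "g z \<noteq> g y" if "z \<in> M" for z
    using g nbr[OF that] that assms(2-4) by blast+
  have "g x \<noteq> g y" "g x < k + 2" "g y < k + 2"
    using g assms(3-5) by blast+
  then have "r (g z) < k" "r (g z) = r (g z') \<longleftrightarrow> g z = g z'" if "z \<in> M" "z' \<in> M" for z z'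
    using g_M[OF that(1)] g_M[OF that(2)] unfolding r_def by auto
  then show ?thesis
    using g(2) assms(2) unfolding colorable_def by (intro exI[of _ "r \<circ> g"]) (simp, blast)
qed

lemma colorable_module_delete:
  assumes "M \<subseteq> V" "a \<in> M" "b \<in> M" "E a b" "z \<in> M" "z \<noteq> a" "z \<noteq> b"
    and module: "\<And>x x' y. x \<in> M \<Longrightarrow> x' \<in> M \<Longrightarrow> y \<in> V - M \<Longrightarrow> E x y \<Longrightarrow> E x' y"
    and sym: "\<And>x y. E x y \<Longrightarrow> E y x"
    and bip: "colorable M E 2" and col: "colorable (V - {z}) E k"
  shows "colorable V E k"
proof -
  obtain g where g: "\<forall>v\<in>M. g v < (2::nat)" "\<forall>x\<in>M. \<forall>y\<in>M. E x y \<longrightarrow> g x \<noteq> g y"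
    using bip unfolding colorable_def by blast
  obtain f where f: "\<forall>v\<in>V - {z}. f v < k" "\<forall>x\<in>V - {z}. \<forall>y\<in>V - {z}. E x y \<longrightarrow> f x \<noteq> f y"
    using col unfolding colorable_def by blast
  \<comment> \<open>recolour M - {a, b} with f a or f b according to the 2-colouring g\<close>
  define h where "h x = (if x \<in> M - {a, b} then (if g x = g a then f a else f b) else f x)" for x
  have gab: "g a \<noteq> g b" and fab: "f a \<noteq> f b"
    using g(2) f(2) assms(1-7) by blast+
  have h_M: "h x = (if g x = g a then f a else f b)" if "x \<in> M" for x
    using gab that unfolding h_def by auto
  have "\<forall>v\<in>V. h v < k"
    using f(1) assms(1-7) unfolding h_def by auto
  moreover have "h x \<noteq> h y" if "x \<in> V" "y \<in> V" "E x y" for x y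
  proof -
    have h_out: "h x \<noteq> h y" if "x \<in> M" "y \<in> V - M" "E x y" for x y
    proof -
      have "E a y" "E b y" using module that assms(2,3) by blast+
      then have "f y \<noteq> f a" "f y \<noteq> f b" using f(2) that assms(1-7) sym by blast+
      then show ?thesis using that h_M unfolding h_def by auto
    qed
    consider "x \<in> M" "y \<in> M" | "x \<in> M" "y \<notin> M" | "x \<notin> M" "y \<in> M" | "x \<notin> M" "y \<notin> M"
      by blast
    then show ?thesis
    proof cases
      case 1
      then have "g x \<noteq> g y" "g x < 2" "g y < 2" "g a < 2" using g that assms(2) by blast+
      then have "(g x = g a) \<noteq> (g y = g a)" by linarith
      then show ?thesis using 1 h_M fab by auto
    next
      case 2
      then show ?thesis using h_out that by blast
    next
      case 3
      then show ?thesis using h_out[of y x] that sym by auto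
    next
      case 4
      then show ?thesis using f(2) that assms(5) unfolding h_def by auto
    qed
  qed
  ultimately show ?thesis unfolding colorable_def by blast
qed

lemma all_less_5: "(\<forall>i<(5::nat). P i) \<longleftrightarrow> P 0 \<and> P 1 \<and> P 2 \<and> P 3 \<and> P 4"
  by (auto simp: less_Suc_eq numeral_eq_Suc)

lemma isomorphic_to_list:
  assumes "distinct xs" "\<forall>i<length xs. \<forall>j<length xs. E (xs ! i) (xs ! j) \<longleftrightarrow> H i j"
  shows "isomorphic_to (set xs) E (length xs) H"
  unfolding isomorphic_to_def
  using bij_betw_nth[OF assms(1)] assms(2) by (auto simp: atLeast0LessThan)

lemma contains_induced_list:
  assumes "distinct xs" "set xs \<subseteq> V" "\<forall>i<length xs. \<forall>j<length xs. E (xs ! i) (xs ! j) \<longleftrightarrow> H i j"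
  shows "contains_induced V E (length xs) H"
proof -
  obtain f where "bij_betw f {0..<length xs} (set xs)"
    "\<forall>i<length xs. \<forall>j<length xs. E (f i) (f j) \<longleftrightarrow> H i j"
    using isomorphic_to_list[OF assms(1,3)] unfolding isomorphic_to_def by blast
  with assms(2) show ?thesis
    unfolding contains_induced_def bij_betw_def by (intro exI[of _ f]) auto
qed

locale critical_P5_chair_free =
  fixes V :: "'a set" and E :: "'a \<Rightarrow> 'a \<Rightarrow> bool"
  assumes simple: "simple_graph V E"
    and critical: "vertex_critical V E 5"
    and P5_free: "\<not> contains_induced V E 5 (adj_rel P5_adj)"
    and chair_free: "\<not> contains_induced V E 5 (adj_rel chair_adj)"
    and not_K5: "\<not> isomorphic_to V E 5 (adj_rel K5_adj)"
begin

lemma E_sym: "E x y \<longleftrightarrow> E y x"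
  and E_irrefl [simp]: "\<not> E x x"
  and E_in_V: "E x y \<Longrightarrow> x \<in> V \<and> y \<in> V"
  using simple unfolding simple_graph_def by blast+

lemma no_induced_P5:
  assumes "E a b" "E b c" "E c d" "E d e"
    and "\<not> E a c" "\<not> E a d" "\<not> E a e" "\<not> E b d" "\<not> E b e" "\<not> E c e"
  shows False
proof -
  have "distinct [a, b, c, d, e]"
    using assms by (auto simp: E_sym)
  moreover have "set [a, b, c, d, e] \<subseteq> V"
    using assms E_in_V by auto
  moreover have "\<forall>i<5. \<forall>j<5. E ([a, b, c, d, e] ! i) ([a, b, c, d, e] ! j) \<longleftrightarrow> adj_rel P5_adj i j"
    unfolding all_less_5 using assms by (simp add: adj_rel_def P5_adj_def E_sym)
  ultimately have "contains_induced V E (length [a, b, c, d, e]) (adj_rel P5_adj)"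
    by (intro contains_induced_list) simp_all
  with P5_free show False by (simp add: numeral_eq_Suc)
qed

lemma no_induced_chair:
  assumes "E a b" "E b c" "E c d" "E b e"
    and "\<not> E a c" "\<not> E a d" "\<not> E a e" "\<not> E b d" "\<not> E c e" "\<not> E d e" "a \<noteq> e"
  shows False
proof -
  have "distinct [a, b, c, d, e]"
    using assms by (auto simp: E_sym)
  moreover have "set [a, b, c, d, e] \<subseteq> V"
    using assms E_in_V by auto
  moreover have "\<forall>i<5. \<forall>j<5. E ([a, b, c, d, e] ! i) ([a, b, c, d, e] ! j) \<longleftrightarrow> adj_rel chair_adj i j"
    unfolding all_less_5 using assms by (simp add: adj_rel_def chair_adj_def E_sym)
  ultimately have "contains_induced V E (length [a, b, c, d, e]) (adj_rel chair_adj)"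
    by (intro contains_induced_list) simp_all
  with chair_free show False by (simp add: numeral_eq_Suc)
qed

lemma no_K5:
  assumes "E a b" "E a c" "E a d" "E a e" "E b c" "E b d" "E b e" "E c d" "E c e" "E d e"
  shows False
proof -
  have dist: "distinct [a, b, c, d, e]"
    using assms by auto
  have "V = set [a, b, c, d, e]"
  proof (rule vertex_critical_clique[OF simple])
    show "vertex_critical V E (Suc 4)" using critical by simp
    show "card (set [a, b, c, d, e]) = Suc 4" using distinct_card[OF dist] by simp
    show "set [a, b, c, d, e] \<subseteq> V"
      using assms E_in_V by auto
    show "E x y" if "x \<in> set [a, b, c, d, e]" "y \<in> set [a, b, c, d, e]" "x \<noteq> y" for x y
      using that assms by (auto simp: E_sym)
  qed
  moreover have "\<forall>i<5. \<forall>j<5. E ([a, b, c, d, e] ! i) ([a, b, c, d, e] ! j) \<longleftrightarrow> adj_rel K5_adj i j"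
    unfolding all_less_5 using assms by (simp add: adj_rel_def K5_adj_def E_sym)
  ultimately have "isomorphic_to V E (length [a, b, c, d, e]) (adj_rel K5_adj)"
    using isomorphic_to_list[OF dist] by simp
  with not_K5 show False by (simp add: numeral_eq_Suc)
qed

lemma not_colorable_4: "\<not> colorable V E 4"
  using vertex_critical_not_colorable[of V E 4] critical by simp

lemma colorable_4_delete: "w \<in> V \<Longrightarrow> colorable (V - {w}) E 4"
  using vertex_critical_colorable_delete[OF simple, of 4] critical by simp

lemma no_dominated_vertex:
  assumes "x \<in> V" "y \<in> V" "x \<noteq> y" "\<not> E x y" "\<And>w. E x w \<Longrightarrow> E y w"
  shows False
  using critical assms by (intro vertex_critical_no_dominated_vertex[OF simple, of 4 x y]) simp_all

end

locale critical_C5 = critical_P5_chair_free +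
  fixes c0 c1 c2 c3 c4 :: 'a
  assumes cycle: "E c0 c1" "E c1 c2" "E c2 c3" "E c3 c4" "E c4 c0"
    and chords: "\<not> E c0 c2" "\<not> E c0 c3" "\<not> E c1 c3" "\<not> E c1 c4" "\<not> E c2 c4"
begin

definition S :: "'a set" where
  "S = {z. E z c0 \<and> E z c2 \<and> E z c3 \<and> \<not> E z c1 \<and> \<not> E z c4}"

definition W :: "'a set" where
  "W = {p. E p c1 \<and> E p c2 \<and> E p c3 \<and> E p c4}"

text \<open>Case analysis on the neighbours of u on the cycle: every neighbourhood other than
  those of S and W yields an induced P5 or chair, given by the arguments below.\<close>

lemma S_neighbour_in_S_or_W:
  assumes "a \<in> S" "b \<in> S" "E u a" "\<not> E u b"
  shows "u \<in> S \<or> u \<in> W"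
  apply (insert assms cycle chords)
  apply (unfold S_def W_def mem_Collect_eq)
  apply (cases "E u c0"; cases "E u c1"; cases "E u c2"; cases "E u c3"; cases "E u c4")
  subgoal by (simp add: E_sym)
  subgoal by (rule no_induced_chair[of c4 c3 u c1 b, THEN FalseE]) (auto simp: E_sym)
  subgoal by (rule no_induced_P5[of c1 u c4 c3 b, THEN FalseE]) (auto simp: E_sym)
  subgoal by (rule no_induced_P5[of c1 u a c3 c4, THEN FalseE]) (auto simp: E_sym)
  subgoal by (rule no_induced_P5[of c4 u c1 c2 b, THEN FalseE]) (auto simp: E_sym)
  subgoal by (rule no_induced_chair[of c4 c0 b c2 u, THEN FalseE]) (auto simp: E_sym)
  subgoal by (rule no_induced_P5[of c1 u c4 c3 b, THEN FalseE]) (auto simp: E_sym)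
  subgoal by (rule no_induced_P5[of c1 u a c3 c4, THEN FalseE]) (auto simp: E_sym)
  subgoal by (rule no_induced_chair[of c1 c2 u c4 b, THEN FalseE]) (auto simp: E_sym)
  subgoal by (simp add: E_sym)
  subgoal by (rule no_induced_chair[of c1 c0 b c3 u, THEN FalseE]) (auto simp: E_sym)
  subgoal by (rule no_induced_chair[of c1 c0 c4 c3 u, THEN FalseE]) (auto simp: E_sym)
  subgoal by (rule no_induced_P5[of c1 c2 a u c4, THEN FalseE]) (auto simp: E_sym)
  subgoal by (rule no_induced_chair[of c4 c0 c1 c2 u, THEN FalseE]) (auto simp: E_sym)
  subgoal by (rule no_induced_P5[of c1 c2 c3 c4 u, THEN FalseE]) (auto simp: E_sym)
  subgoal by (rule no_induced_P5[of c2 c3 c4 c0 u, THEN FalseE]) (auto simp: E_sym)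
  subgoal by (simp add: E_sym)
  subgoal by (rule no_induced_P5[of c4 c0 b c2 u, THEN FalseE]) (auto simp: E_sym)
  subgoal by (rule no_induced_P5[of c1 u c4 c3 b, THEN FalseE]) (auto simp: E_sym)
  subgoal by (rule no_induced_P5[of c0 c4 c3 c2 u, THEN FalseE]) (auto simp: E_sym)
  subgoal by (rule no_induced_P5[of c2 b c0 c4 u, THEN FalseE]) (auto simp: E_sym)
  subgoal by (rule no_induced_chair[of c2 c1 c0 c4 u, THEN FalseE]) (auto simp: E_sym)
  subgoal by (rule no_induced_P5[of c1 u c4 c3 b, THEN FalseE]) (auto simp: E_sym)
  subgoal by (rule no_induced_P5[of c1 u a c3 c4, THEN FalseE]) (auto simp: E_sym)
  subgoal by (rule no_induced_P5[of c1 c0 b c3 u, THEN FalseE]) (auto simp: E_sym)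
  subgoal by (rule no_induced_P5[of c1 c0 c4 c3 u, THEN FalseE]) (auto simp: E_sym)
  subgoal by (rule no_induced_chair[of c1 c0 c4 u b, THEN FalseE]) (auto simp: E_sym)
  subgoal by (rule no_induced_P5[of c0 c4 c3 c2 u, THEN FalseE]) (auto simp: E_sym)
  subgoal by (rule no_induced_P5[of c0 c1 c2 c3 u, THEN FalseE]) (auto simp: E_sym)
  subgoal by (rule no_induced_P5[of c0 c1 c2 c3 u, THEN FalseE]) (auto simp: E_sym)
  subgoal by (rule no_induced_P5[of c1 c2 c3 c4 u, THEN FalseE]) (auto simp: E_sym)
  subgoal by (rule no_induced_chair[of c1 c0 a u c4, THEN FalseE]) (auto simp: E_sym)
  done

lemma S_iff: "z \<in> S \<longleftrightarrow> E z c0 \<and> E z c2 \<and> E z c3 \<and> \<not> E z c1 \<and> \<not> E z c4"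
  and W_iff: "p \<in> W \<longleftrightarrow> E p c1 \<and> E p c2 \<and> E p c3 \<and> E p c4"
  unfolding S_def W_def by simp_all

lemma S_subset_V: "S \<subseteq> V"
  using E_in_V unfolding S_def by blast

lemma finite_S: "finite S"
  using S_subset_V simple finite_subset unfolding simple_graph_def by blast

lemma S_triangle_free:
  assumes "a \<in> S" "b \<in> S" "c \<in> S" "E a b" "E b c" "E a c"
  shows False
  by (rule no_K5[of a b c c2 c3]) (use assms cycle in \<open>auto simp: S_iff\<close>)

lemma W_no_neighbour_on_S_edge:
  assumes "p \<in> W" "a \<in> S" "b \<in> S" "E a b" "E p a"
  shows False
proof (cases "E p b")
  case True
  show False
    by (rule no_K5[of a b c2 c3 p]) (use True assms cycle in \<open>auto simp: S_iff W_iff E_sym\<close>)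
next
  case False
  show False
    by (rule no_induced_chair[of c1 p a b c4]) (use False assms cycle chords in \<open>auto simp: S_iff W_iff E_sym\<close>)
qed

lemma W_dominates_S_nonedge:
  assumes "p \<in> W" "a \<in> S" "c \<in> S" "a \<noteq> c" "\<not> E a c"
  shows "E p a \<or> E p c"
proof (rule ccontr)
  assume "\<not> (E p a \<or> E p c)"
  then show False
    by (intro no_induced_chair[of a c2 p c4 c]) (use assms cycle chords in \<open>auto simp: S_iff W_iff E_sym\<close>)
qed

lemma W_private_neighbours_adjacent:
  assumes "p \<in> W" "q \<in> W" "c \<in> S" "d \<in> S" "\<not> E c d"
    and "E p c" "\<not> E p d" "E q d" "\<not> E q c"
  shows "E p q"
proof (rule ccontr)
  assume "\<not> E p q"
  then show False
    by (intro no_induced_P5[of c p c1 q d]) (use assms in \<open>auto simp: S_iff W_iff E_sym\<close>)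
qed

lemma S_module_if_W_empty:
  assumes "W = {}" "z \<in> S" "z' \<in> S" "y \<notin> S" "E z y"
  shows "E z' y"
  using S_neighbour_in_S_or_W[of z z' y] assms E_sym by blast

lemma S_colorable_2: "colorable S E 2"
proof (rule colorable_common_neighbours_of_edge)
  show "colorable (V - {c0}) E (2 + 2)"
    using colorable_4_delete E_in_V cycle(1) by simp
  show "S \<subseteq> V - {c0}" "c2 \<in> V - {c0}" "c3 \<in> V - {c0}"
    using S_subset_V E_in_V cycle chords by (auto simp: S_iff E_sym)
qed (use cycle in \<open>auto simp: S_iff\<close>)

lemma W_nonempty_if_S_has_edge:
  assumes "a \<in> S" "b \<in> S" "E a b" "z \<in> S" "z \<noteq> a" "z \<noteq> b"
  shows "W \<noteq> {}"
proof
  assume "W = {}"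
  have "colorable V E 4"
  proof (rule colorable_module_delete[where M = S and a = a and b = b and z = z])
    show "S \<subseteq> V" by (rule S_subset_V)
    show "E x' y" if "x \<in> S" "x' \<in> S" "y \<in> V - S" "E x y" for x x' y
      using S_module_if_W_empty[OF \<open>W = {}\<close>] that by blast
    show "colorable (V - {z}) E 4"
      using colorable_4_delete S_subset_V \<open>z \<in> S\<close> by blast
  qed (use assms S_colorable_2 E_sym in auto)
  with not_colorable_4 show False ..
qed

lemma S_edge_vertices_adjacent_if_W_nonempty:
  assumes "p \<in> W" "a \<in> S" "b \<in> S" "x \<in> S" "y \<in> S" "E a b" "E x y" "a \<noteq> x"
  shows "E a x"
  using W_dominates_S_nonedge[of p a x] W_no_neighbour_on_S_edge[of p a b]
    W_no_neighbour_on_S_edge[of p x y] assms by blast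

lemma S_private_neighbour_in_W:
  assumes "c \<in> S" "d \<in> S" "c \<noteq> d" "\<forall>x\<in>S. \<not> E c x"
  shows "\<exists>w\<in>W. E c w \<and> \<not> E d w"
proof -
  obtain w where w: "E c w" "\<not> E d w"
    using no_dominated_vertex[of c d] assms S_subset_V by blast
  then have "w \<in> S \<or> w \<in> W"
    using S_neighbour_in_S_or_W[of c d w] assms E_sym by blast
  with w assms show ?thesis by blast
qed

lemma S_has_no_edge_if_card_ge_4:
  assumes "4 \<le> card S" "a \<in> S" "b \<in> S" "E a b"
  shows False
proof -
  have "a \<noteq> b" using \<open>E a b\<close> by auto
  then have "card {a, b} = 2" by simp
  then have "2 \<le> card (S - {a, b})"
    using assms finite_S by (simp add: card_Diff_subset)
  then obtain T where "T \<subseteq> S - {a, b}" "card T = 2"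
    by (meson obtain_subset_with_card_n)
  then obtain c d where cd: "c \<in> S - {a, b}" "d \<in> S - {a, b}" "c \<noteq> d"
    by (auto simp: card_2_iff)
  obtain p where "p \<in> W"
    using W_nonempty_if_S_has_edge[of a b c] assms cd by blast
  have isolated: "\<not> E x y" if "x \<in> {c, d}" "y \<in> S" for x y
  proof
    assume "E x y"
    then have "E a x" "E b x"
      using S_edge_vertices_adjacent_if_W_nonempty[OF \<open>p \<in> W\<close>] assms cd that E_sym by blast+
    then show False
      using S_triangle_free[of a b x] assms cd that by blast
  qed
  then obtain w where w: "w \<in> W" "E c w" "\<not> E d w"
    using S_private_neighbour_in_W[of c d] cd by blast
  have "\<not> E w a"
    using W_no_neighbour_on_S_edge[of w a b] w assms by blast
  moreover have "E w a \<or> E w d"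
    using W_dominates_S_nonedge[of w a d] w assms cd isolated E_sym by blast
  ultimately show False using w E_sym by blast
qed

lemma S_has_edge_if_card_ge_3:
  assumes "3 \<le> card S"
  shows "\<exists>a\<in>S. \<exists>b\<in>S. E a b"
proof (rule ccontr)
  assume independent: "\<not> (\<exists>a\<in>S. \<exists>b\<in>S. E a b)"
  obtain T where "T \<subseteq> S" "card T = 3"
    using assms by (meson obtain_subset_with_card_n)
  then obtain c d e where cde: "c \<in> S" "d \<in> S" "e \<in> S" "c \<noteq> d" "c \<noteq> e" "d \<noteq> e"
    by (auto simp: card_3_iff)
  obtain p where p: "p \<in> W" "E c p" "\<not> E d p"
    using S_private_neighbour_in_W[of c d] cde independent by blast
  obtain q where q: "q \<in> W" "E d q" "\<not> E c q"
    using S_private_neighbour_in_W[of d c] cde independent by blast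
  have "E p e"
    using W_dominates_S_nonedge[of p d e] p cde independent E_sym by blast
  moreover have "E q e"
    using W_dominates_S_nonedge[of q c e] q cde independent E_sym by blast
  moreover have "E p q"
    using W_private_neighbours_adjacent[of p q c d] p q cde independent E_sym by blast
  ultimately show False
    by (intro no_K5[of p q e c2 c3]) (use p q cde cycle in \<open>auto simp: S_iff W_iff E_sym\<close>)
qed

lemma S_eq_S23_pattern:
  "S = {u \<in> V - {c0, c1, c2, c3, c4}. {w \<in> {c0, c1, c2, c3, c4}. E u w} = {c3, c0, c2}}"
    (is "S = {u \<in> V - ?C. ?N u = _}")
proof (intro set_eqI iffI)
  have dist: "distinct [c0, c1, c2, c3, c4]"
    using cycle chords by (auto simp: E_sym)
  fix u
  show "u \<in> {u \<in> V - ?C. ?N u = {c3, c0, c2}}" if "u \<in> S"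
    using that dist E_in_V cycle chords by (auto simp: S_iff E_sym)
  show "u \<in> S" if "u \<in> {u \<in> V - ?C. ?N u = {c3, c0, c2}}"
  proof -
    have "E u w \<longleftrightarrow> w \<in> {c3, c0, c2}" if "w \<in> ?C" for w
      using that \<open>u \<in> {u \<in> V - ?C. ?N u = {c3, c0, c2}}\<close> by blast
    from this[of c0] this[of c1] this[of c2] this[of c3] this[of c4] show "u \<in> S"
      using dist by (auto simp: S_iff)
  qed
qed

theorem card_S_le_3: "card S \<le> 3"
proof (rule ccontr)
  assume "\<not> card S \<le> 3"
  then obtain a b where "a \<in> S" "b \<in> S" "E a b"
    using S_has_edge_if_card_ge_3 by fastforce
  with \<open>\<not> card S \<le> 3\<close> show False
    using S_has_no_edge_if_card_ge_4 by simp
qed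

end

lemma induced_C5_rotate:
  assumes C: "induced_C5 V E v" and "i < 5" and c: "\<And>j. c j = v ((i + j) mod 5)"
  shows "E (c 0) (c 1) \<and> E (c 1) (c 2) \<and> E (c 2) (c 3) \<and> E (c 3) (c 4) \<and> E (c 4) (c 0)
      \<and> \<not> E (c 0) (c 2) \<and> \<not> E (c 0) (c 3) \<and> \<not> E (c 1) (c 3) \<and> \<not> E (c 1) (c 4) \<and> \<not> E (c 2) (c 4)
      \<and> v ` {0..<5} = {c 0, c 1, c 2, c 3, c 4}"
proof -
  have adj: "E (v p) (v q) \<longleftrightarrow> q = (p + 1) mod 5 \<or> p = (q + 1) mod 5" if "p < 5" "q < 5" for p q
    using C that unfolding induced_C5_def by blast
  have "{0..<5::nat} = {0, 1, 2, 3, 4}" by auto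
  then have "v ` {0..<5} = {v 0, v 1, v 2, v 3, v 4}" by simp
  moreover have "i = 0 \<or> i = 1 \<or> i = 2 \<or> i = 3 \<or> i = 4"
    using \<open>i < 5\<close> by linarith
  ultimately show ?thesis
    unfolding c by (elim disjE; simp add: adj insert_commute numeral_2_eq_2)
qed

theorem mainTheorem16:
  fixes V :: "'a set" and E :: "'a \<Rightarrow> 'a \<Rightarrow> bool" and v :: "nat \<Rightarrow> 'a"
  assumes "simple_graph V E"
    and "vertex_critical V E 5"
    and "\<not> contains_induced V E 5 (adj_rel P5_adj)"
    and "\<not> contains_induced V E 5 (adj_rel chair_adj)"
    and "\<forall>A\<in>family_F. \<not> isomorphic_to V E (length A) (adj_rel A)"
    and "induced_C5 V E v"
  shows "\<forall>i<5. card (S23 V E v i) \<le> 3"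
proof (intro allI impI)
  fix i :: nat assume "i < 5"
  define c where "c j = v ((i + j) mod 5)" for j
  have "\<not> isomorphic_to V E (length K5_adj) (adj_rel K5_adj)"
    using assms(5) by (simp add: family_F_def)
  moreover have "length K5_adj = 5" by (simp add: K5_adj_def)
  ultimately have "\<not> isomorphic_to V E 5 (adj_rel K5_adj)" by metis
  then interpret critical_P5_chair_free V E
    using assms(1-4) by unfold_locales
  note rot = induced_C5_rotate[OF assms(6) \<open>i < 5\<close> c_def]
  interpret critical_C5 V E "c 0" "c 1" "c 2" "c 3" "c 4"
    using rot by unfold_locales blast+
  have "S23 V E v i = S"
    using rot \<open>i < 5\<close> unfolding S23_def S_eq_S23_pattern by (simp add: c_def)
  then show "card (S23 V E v i) \<le> 3"
    using card_S_le_3 by simp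
qed

end
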